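(* Let $v_1,\dots,v_m$ be nonzero vectors spanning $\mathbb{R}^n$ ($m\ge n$), and let $c=(c_i)_{i=1}^m$ with $c_i>0$ and $\sum_i c_i=n$. Define $\phi:\mathbb{R}^m\to\mathbb{R}$ by $\phi(x_1,\dots,x_m)=\log\det\big(\sum_{i=1}^m e^{x_i}v_i\otimes v_i\big)$, and let $\phi^*(y)=\sup_{x\in\mathbb{R}^m}(\langle y,x\rangle-\phi(x))$ be its Fenchel conjugate, with $\mathrm{dom}(\phi^* )=\{y;\ \phi^*(y)<+\infty\}$. Let $D_c=\inf\{\det(\sum_i\lambda_iv_i\otimes v_i)/\prod_i\lambda_i^{c_i};\ \lambda_i>0\}$ and $K=\mathrm{conv}\{1_I;\ |I|=n,\ d_I\ne0\}$. Then: (1) $\phi$ is convex; (2) $D_c=\exp(-\phi^*(c))$ (with $\exp(-\infty)=0$); (3) $D_c>0$ if and only if $c\in\mathrm{dom}(\phi^* )$; (4) the infimum $D_c$ is attained if and only if the supremum defining $\phi^*(c)$ is attained; (5) $\mathrm{dom}(\phi^* )=K$; (6) $D_c$ is attained whenever $c$ belongs to the relative interior of $K$.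
   Context: For $I\subset\{1,\dots,m\}$ with $|I|=n$: $d_I=\det((v_i)_{i\in I})^2$ and $1_I\in\mathbb{R}^m$ is the indicator vector of $I$. $v\otimes v=vv^T$. *)

theory Defs
  imports "HOL-Analysis.Analysis"
begin

definition outer :: "real^'n \<Rightarrow> real^'n^'n" where
  "outer v = (\<chi> a b. v$a * v$b)"

definition phi :: "('m::finite \<Rightarrow> real^'n) \<Rightarrow> real^'m \<Rightarrow> real" where
  "phi v x = ln (det (\<Sum>i\<in>UNIV. exp (x$i) *\<^sub>R outer (v i)))"

definition phi_star :: "('m::finite \<Rightarrow> real^'n) \<Rightarrow> real^'m \<Rightarrow> ereal" where
  "phi_star v y = (SUP x\<in>UNIV. ereal (y \<bullet> x - phi v x))"

definition dom_phi_star :: "('m::finite \<Rightarrow> real^'n) \<Rightarrow> (real^'m) set" where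
  "dom_phi_star v = {y. phi_star v y < \<infinity>}"

definition BL_ratio :: "('m::finite \<Rightarrow> real^'n) \<Rightarrow> real^'m \<Rightarrow> real^'m \<Rightarrow> real" where
  "BL_ratio v c lam = det (\<Sum>i\<in>UNIV. lam$i *\<^sub>R outer (v i)) / (\<Prod>i\<in>UNIV. (lam$i) powr (c$i))"

definition D_const :: "('m::finite \<Rightarrow> real^'n) \<Rightarrow> real^'m \<Rightarrow> real" where
  "D_const v c = Inf (BL_ratio v c ` {lam. \<forall>i. lam$i > 0})"

text \<open>d_I = det((v_i)_{i in I})^2, the columns ordered by some bijection 'n -> I
  (the value does not depend on the ordering); 0 if |I| \<noteq> n.\<close>
definition d_I :: "('m::finite \<Rightarrow> real^'n) \<Rightarrow> 'm set \<Rightarrow> real" where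
  "d_I v I = (if \<exists>f::'n \<Rightarrow> 'm. bij_betw f UNIV I
     then (let f = (SOME f::'n \<Rightarrow> 'm. bij_betw f UNIV I) in (det (\<chi> a b. v (f b) $ a))^2)
     else 0)"

definition indic_vec :: "'m set \<Rightarrow> real^'m::finite" where
  "indic_vec I = (\<chi> i. if i \<in> I then 1 else 0)"

definition K_poly :: "('m::finite \<Rightarrow> real^'n) \<Rightarrow> (real^'m) set" where
  "K_poly v = convex hull {indic_vec I | I. card I = CARD('n) \<and> d_I v I \<noteq> 0}"

end

theory Submission
  imports Defs
begin

(* By the Cauchy-Binet formula, det (sum_i lam_i v_i v_i^T) is the sum over |I| = n of
   d_I prod_{i in I} lam_i, so phi x = ln (sum_I d_I exp <1_I, x>) is a log-sum-exp function of
   the vertices 1_I of K with positive weights d_I; this makes phi convex. The substitution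
   lam_i = exp x_i turns the Brascamp-Lieb ratio into exp (- (<c, x> - phi x)), so
   D_c = exp (- phi*(c)) and the infimum and the supremum are attained together.
   The conjugate of a log-sum-exp function is bounded on the convex hull of its vertices
   (average the bounds ln d_I + <1_I, x> <= phi x) and unbounded off it (move against a
   separating hyperplane). If c is in the relative interior, then c = sum_I mu_I 1_I with all
   mu_I > 0; the objective depends only on the coordinates <1_I - c, x>, which mu balances, so
   its superlevel sets are bounded in these coordinates and compactness yields a maximiser. *)

section \<open>Cauchy--Binet for sums of rank-one matrices\<close>

lemma det_linear_rows_sum_PiE:
  fixes a :: "'n::finite \<Rightarrow> 'k \<Rightarrow> 'a::comm_ring_1^'n"
  assumes "finite S" and "finite T"
  shows "det (\<chi> i. if i \<in> T then sum (a i) S else c i) =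
    (\<Sum>f\<in>T \<rightarrow>\<^sub>E S. det (\<chi> i. if i \<in> T then a i (f i) else c i))"
  using \<open>finite T\<close>
proof (induction T arbitrary: c)
  case empty
  then show ?case by simp
next
  case (insert z T c)
  define c' where "c' i = (if i = z then sum (a i) S else c i)" for i
  let ?row = "\<lambda>y g i. if i = z then a i y else if i \<in> T then a i (g i) else c i"
  have "det (\<chi> i. if i \<in> insert z T then sum (a i) S else c i) =
      det (\<chi> i. if i \<in> T then sum (a i) S else c' i)"
    by (intro arg_cong[where f=det]) (vector c'_def)
  also have "\<dots> = (\<Sum>g\<in>T \<rightarrow>\<^sub>E S. det (\<chi> i. if i \<in> T then a i (g i) else c' i))"
    by (rule insert.IH)
  also have "\<dots> = (\<Sum>g\<in>T \<rightarrow>\<^sub>E S. \<Sum>y\<in>S. det (\<chi> i. ?row y g i))"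
  proof (rule sum.cong[OF refl])
    fix g
    have "(\<chi> i. if i \<in> T then a i (g i) else c' i) =
        (\<chi> i. if i = z then sum (a i) S else if i \<in> T then a i (g i) else c i)"
      using insert.hyps(2) by (vector c'_def)
    then show "det (\<chi> i. if i \<in> T then a i (g i) else c' i) = (\<Sum>y\<in>S. det (\<chi> i. ?row y g i))"
      by (simp add: det_linear_row_sum[OF \<open>finite S\<close>])
  qed
  also have "\<dots> = (\<Sum>(y, g)\<in>S \<times> (T \<rightarrow>\<^sub>E S). det (\<chi> i. ?row y g i))"
    by (subst sum.cartesian_product[symmetric]) (rule sum.swap)
  also have "\<dots> = (\<Sum>f\<in>insert z T \<rightarrow>\<^sub>E S. det (\<chi> i. if i \<in> insert z T then a i (f i) else c i))"
  proof -
    have inj: "inj_on (\<lambda>(y, g). g(z := y)) (S \<times> (T \<rightarrow>\<^sub>E S))"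
      using inj_combinator[of z T "\<lambda>_. S"] insert.hyps(2) by simp
    have "insert z T \<rightarrow>\<^sub>E S = (\<lambda>(y, g). g(z := y)) ` (S \<times> (T \<rightarrow>\<^sub>E S))"
      using PiE_insert_eq[of z T "\<lambda>_. S"] by simp
    then show ?thesis
      using insert.hyps(2)
      by (auto simp: sum.reindex[OF inj] fun_eq_iff
          intro!: sum.cong arg_cong[where f=det] arg_cong[where f=vec_lambda])
  qed
  finally show ?case .
qed

lemma det_sum_scaleR_outer_expand:
  fixes v :: "'m::finite \<Rightarrow> real^'n"
  shows "det (\<Sum>i\<in>UNIV. lam i *\<^sub>R outer (v i)) =
    (\<Sum>f\<in>UNIV. (\<Prod>a\<in>UNIV. lam (f a) * v (f a) $ a) * det (\<chi> a. v (f a)))"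
proof -
  have rows: "(\<Sum>i\<in>UNIV. lam i *\<^sub>R outer (v i)) = (\<chi> a. \<Sum>i\<in>UNIV. (lam i * v i $ a) *s v i)"
    by (vector outer_def sum_component mult.assoc)
  show ?thesis
    unfolding rows using det_linear_rows_sum_PiE[of UNIV UNIV "\<lambda>a i. (lam i * v i $ a) *s v i"]
    by (simp add: det_rows_mul)
qed

lemma d_I_nonneg: "d_I v I \<ge> 0"
  by (simp add: d_I_def Let_def)

lemma d_I_eq_det_rows:
  fixes v :: "'m::finite \<Rightarrow> real^'n"
  assumes "card I = CARD('n)"
  obtains g :: "'n \<Rightarrow> 'm" where "bij_betw g UNIV I" and "d_I v I = (det (\<chi> a. v (g a)))\<^sup>2"
proof -
  have ex: "\<exists>g::'n \<Rightarrow> 'm. bij_betw g UNIV I"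
    using assms by (metis finite finite_same_card_bij finite_UNIV)
  define g where "g = (SOME g::'n \<Rightarrow> 'm. bij_betw g UNIV I)"
  have "bij_betw g UNIV I"
    unfolding g_def using someI_ex[OF ex] .
  moreover have "d_I v I = (det (transpose (\<chi> a b. v (g b) $ a)))\<^sup>2"
    using ex by (simp add: d_I_def g_def)
  moreover have "transpose (\<chi> a b. v (g b) $ a) = (\<chi> a. v (g a))"
    by (simp add: transpose_def)
  ultimately show ?thesis
    using that by simp
qed

lemma inj_range_eq_image_comp_permutes:
  fixes g :: "'n::finite \<Rightarrow> 'm"
  assumes g: "bij_betw g UNIV I"
  shows "{f. inj f \<and> range f = I} = (\<lambda>p. g \<circ> p) ` {p. p permutes UNIV}"
proof (intro set_eqI iffI)
  fix f :: "'n \<Rightarrow> 'm"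
  assume f: "f \<in> {f. inj f \<and> range f = I}"
  define p where "p = inv_into UNIV g \<circ> f"
  have "bij_betw f UNIV I"
    using f by (simp add: bij_betw_def)
  then have "bij_betw p UNIV UNIV"
    unfolding p_def using bij_betw_inv_into[OF g] by (rule bij_betw_trans)
  then have "p permutes UNIV"
    using bij_imp_permutes[of p UNIV] by simp
  moreover have "f = g \<circ> p"
    using f g by (auto simp: p_def fun_eq_iff bij_betw_def) (metis f_inv_into_f rangeI)
  ultimately show "f \<in> (\<lambda>p. g \<circ> p) ` {p. p permutes UNIV}"
    by blast
next
  fix f
  assume "f \<in> (\<lambda>p. g \<circ> p) ` {p. p permutes (UNIV::'n set)}"
  then obtain p where p: "p permutes UNIV" "f = g \<circ> p"
    by blast
  have "inj f"
    using p g permutes_inj inj_compose by (blast dest: bij_betw_imp_inj_on)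
  moreover have "range f = I"
    using p g permutes_image[OF p(1)] by (metis bij_betw_imp_surj_on image_comp)
  ultimately show "f \<in> {f. inj f \<and> range f = I}"
    by blast
qed

lemma sum_injective_terms_eq_d_I:
  fixes v :: "'m::finite \<Rightarrow> real^'n"
  assumes "card I = CARD('n)"
  shows "(\<Sum>f | inj f \<and> range f = I. (\<Prod>a\<in>UNIV. lam (f a) * v (f a) $ a) * det (\<chi> a. v (f a)))
     = d_I v I * (\<Prod>i\<in>I. lam i)"
proof -
  obtain g :: "'n \<Rightarrow> 'm" where g: "bij_betw g UNIV I" and dI: "d_I v I = (det (\<chi> a. v (g a)))\<^sup>2"
    using d_I_eq_det_rows[OF assms] .
  define B where "B = (\<chi> a. v (g a))"
  have inj_comp: "inj_on (\<lambda>p. g \<circ> p) {p. p permutes UNIV}"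
    using g by (auto simp: inj_on_def fun_eq_iff bij_betw_def inj_def)
  have summand: "(\<Prod>a\<in>UNIV. lam (g (p a)) * v (g (p a)) $ a) * det (\<chi> a. v (g (p a)))
      = ((\<Prod>i\<in>I. lam i) * det B) * (of_int (sign p) * (\<Prod>a\<in>UNIV. transpose B $ a $ p a))"
    if p: "p permutes UNIV" for p
  proof -
    have "(\<Prod>a\<in>UNIV. lam (g (p a))) = (\<Prod>i\<in>I. lam i)"
      using prod.permute[OF p, of "\<lambda>a. lam (g a)"] prod.reindex_bij_betw[OF g, of lam]
      by (simp add: o_def)
    moreover have "det (\<chi> a. v (g (p a))) = of_int (sign p) * det B"
      using det_permute_rows[OF p, of B] by (simp add: B_def)
    ultimately show ?thesis
      by (simp add: prod.distrib B_def transpose_def)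
  qed
  have "(\<Sum>f | inj f \<and> range f = I. (\<Prod>a\<in>UNIV. lam (f a) * v (f a) $ a) * det (\<chi> a. v (f a)))
     = (\<Sum>p | p permutes UNIV.
          ((\<Prod>i\<in>I. lam i) * det B) * (of_int (sign p) * (\<Prod>a\<in>UNIV. transpose B $ a $ p a)))"
    unfolding inj_range_eq_image_comp_permutes[OF g] sum.reindex[OF inj_comp]
    by (intro sum.cong) (simp_all add: summand)
  also have "\<dots> = ((\<Prod>i\<in>I. lam i) * det B) * det (transpose B)"
    by (simp add: det_def sum_distrib_left)
  also have "\<dots> = d_I v I * (\<Prod>i\<in>I. lam i)"
    by (simp add: dI B_def power2_eq_square)
  finally show ?thesis .
qed

theorem cauchy_binet_sum_outer:
  fixes v :: "'m::finite \<Rightarrow> real^'n"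
  shows "det (\<Sum>i\<in>UNIV. lam i *\<^sub>R outer (v i)) =
    (\<Sum>I | card I = CARD('n). d_I v I * (\<Prod>i\<in>I. lam i))"
proof -
  let ?T = "\<lambda>f::'n \<Rightarrow> 'm. (\<Prod>a\<in>UNIV. lam (f a) * v (f a) $ a) * det (\<chi> a. v (f a))"
  have "?T f = 0" if "\<not> inj f" for f
  proof -
    from that obtain a b where ab: "a \<noteq> b" "f a = f b" by (auto simp: inj_def)
    have "det (\<chi> a. v (f a)) = 0"
      by (rule det_identical_rows[OF ab(1)]) (simp add: row_def ab(2))
    then show ?thesis by simp
  qed
  then have "det (\<Sum>i\<in>UNIV. lam i *\<^sub>R outer (v i)) = (\<Sum>f | inj f. ?T f)"
    unfolding det_sum_scaleR_outer_expand by (intro sum.mono_neutral_right) auto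
  also have "\<dots> = (\<Sum>I | card I = CARD('n). \<Sum>f | inj f \<and> range f = I. ?T f)"
    using sum.group[of "{f. inj f}" "{I. card I = CARD('n)}" range ?T]
    by (simp add: card_image image_subset_iff)
  also have "\<dots> = (\<Sum>I | card I = CARD('n). d_I v I * (\<Prod>i\<in>I. lam i))"
    by (intro sum.cong) (simp_all add: sum_injective_terms_eq_d_I)
  finally show ?thesis .
qed

lemma outer_mult_vec: "outer v *v x = (v \<bullet> x) *\<^sub>R v"
  by (simp add: outer_def matrix_vector_mult_def inner_vec_def vec_eq_iff sum_distrib_left
      mult.assoc mult.commute mult.left_commute)

lemma sum_matrix_vector_mult: "finite A \<Longrightarrow> (\<Sum>i\<in>A. M i) *v x = (\<Sum>i\<in>A. M i *v x)"
  for M :: "'i \<Rightarrow> real^'n^'m"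
  by (induct A rule: finite_induct) (auto simp: matrix_vector_mult_add_rdistrib)

lemma det_sum_outer_nonzero:
  fixes v :: "'m::finite \<Rightarrow> real^'n"
  assumes "span (range v) = UNIV"
  shows "det (\<Sum>i\<in>UNIV. outer (v i)) \<noteq> 0"
proof -
  let ?M = "\<Sum>i\<in>UNIV. outer (v i)"
  have "x = 0" if "?M *v x = 0" for x
  proof -
    have "(\<Sum>i\<in>UNIV. (v i \<bullet> x)\<^sup>2) = x \<bullet> (?M *v x)"
      by (simp add: sum_matrix_vector_mult outer_mult_vec inner_sum_right power2_eq_square inner_commute)
    then have "\<forall>i. v i \<bullet> x = 0"
      using that by (simp add: sum_nonneg_eq_0_iff)
    then have "orthogonal x y" if "y \<in> range v" for y
      using that by (auto simp: orthogonal_def inner_commute)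
    then have "orthogonal x x"
      using orthogonal_to_span[of x "range v" x] assms by blast
    then show ?thesis by (simp add: orthogonal_def)
  qed
  then obtain B where "B ** ?M = mat 1"
    using matrix_left_invertible_ker by blast
  then have "det B * det ?M = 1" by (metis det_I det_mul)
  then show ?thesis by auto
qed

section \<open>Log-sum-exp functions\<close>

definition log_sum_exp :: "'k set \<Rightarrow> ('k \<Rightarrow> real) \<Rightarrow> ('k \<Rightarrow> 'a::real_inner) \<Rightarrow> 'a \<Rightarrow> real" where
  "log_sum_exp S w a x = ln (\<Sum>k\<in>S. w k * exp (a k \<bullet> x))"

lemma weighted_exp_sum_pos:
  assumes "finite S" "S \<noteq> {}" "\<forall>k\<in>S. w k > 0"
  shows "(\<Sum>k\<in>S. w k * exp (a k \<bullet> x)) > 0"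
  using assms by (intro sum_pos) auto

lemma convex_on_log_sum_exp:
  fixes a :: "'k \<Rightarrow> 'a::real_inner"
  assumes "finite S" "S \<noteq> {}" and w: "\<forall>k\<in>S. w k > 0"
  shows "convex_on UNIV (log_sum_exp S w a)"
proof (rule convex_onI)
  fix t :: real and x y :: 'a
  assume t: "0 < t" "t < 1"
  define E where "E z = (\<Sum>k\<in>S. w k * exp (a k \<bullet> z))" for z
  have E_pos: "E z > 0" for z
    unfolding E_def using weighted_exp_sum_pos[OF assms] .
  define m where "m = exp ((1 - t) * ln (E x) + t * ln (E y))"
  have termwise: "w k * exp (a k \<bullet> ((1 - t) *\<^sub>R x + t *\<^sub>R y)) \<le>
      m * ((1 - t) * (w k * exp (a k \<bullet> x) / E x) + t * (w k * exp (a k \<bullet> y) / E y))"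
    if "k \<in> S" for k
  proof -
    \<comment> \<open>Normalising by \<open>E x\<close> and \<open>E y\<close> reduces the claim to convexity of \<open>exp\<close>.\<close>
    have "exp (a k \<bullet> ((1 - t) *\<^sub>R x + t *\<^sub>R y)) =
        m * exp ((1 - t) * (a k \<bullet> x - ln (E x)) + t * (a k \<bullet> y - ln (E y)))"
      by (simp add: m_def inner_add_right exp_add[symmetric] algebra_simps)
    also have "\<dots> \<le> m * ((1 - t) * exp (a k \<bullet> x - ln (E x)) + t * exp (a k \<bullet> y - ln (E y)))"
      using convex_onD[OF exp_convex, of t] t by (intro mult_left_mono) (auto simp: m_def)
    finally have "w k * exp (a k \<bullet> ((1 - t) *\<^sub>R x + t *\<^sub>R y)) \<le>
        w k * (m * ((1 - t) * exp (a k \<bullet> x - ln (E x)) + t * exp (a k \<bullet> y - ln (E y))))"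
      by (rule mult_left_mono) (use w that in auto)
    then show ?thesis
      using E_pos by (simp add: exp_diff algebra_simps)
  qed
  have "E ((1 - t) *\<^sub>R x + t *\<^sub>R y) \<le>
      (\<Sum>k\<in>S. m * ((1 - t) * (w k * exp (a k \<bullet> x) / E x) + t * (w k * exp (a k \<bullet> y) / E y)))"
    unfolding E_def[of "(1 - t) *\<^sub>R x + t *\<^sub>R y"] by (rule sum_mono) (rule termwise)
  also have "\<dots> = m * ((1 - t) * (E x / E x) + t * (E y / E y))"
    unfolding E_def by (simp only: distrib_left sum.distrib sum_distrib_left sum_divide_distrib)
  also have "\<dots> = m"
    using E_pos[of x] E_pos[of y] by simp
  finally have "ln (E ((1 - t) *\<^sub>R x + t *\<^sub>R y)) \<le> ln m"
    using E_pos by (blast intro: ln_mono)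
  then show "log_sum_exp S w a ((1 - t) *\<^sub>R x + t *\<^sub>R y) \<le>
      (1 - t) * log_sum_exp S w a x + t * log_sum_exp S w a y"
    by (simp add: log_sum_exp_def E_def m_def)
qed simp

lemma ln_weight_plus_inner_le_log_sum_exp:
  assumes "finite S" "\<forall>k\<in>S. w k > 0" "k \<in> S"
  shows "ln (w k) + a k \<bullet> x \<le> log_sum_exp S w a x"
proof -
  have "w k * exp (a k \<bullet> x) \<le> (\<Sum>k\<in>S. w k * exp (a k \<bullet> x))"
    using assms by (intro member_le_sum) (auto intro: less_imp_le)
  then have "ln (w k * exp (a k \<bullet> x)) \<le> log_sum_exp S w a x"
    unfolding log_sum_exp_def using assms by (intro ln_mono) auto
  moreover have "w k > 0"
    using assms by blast
  ultimately show ?thesis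
    by (simp add: ln_mult)
qed

lemma convex_hull_image_finite:
  fixes a :: "'k \<Rightarrow> 'a::real_vector"
  assumes "finite S"
  shows "y \<in> convex hull (a ` S) \<longleftrightarrow>
    (\<exists>\<mu>. (\<forall>k\<in>S. \<mu> k \<ge> 0) \<and> sum \<mu> S = 1 \<and> (\<Sum>k\<in>S. \<mu> k *\<^sub>R a k) = y)"
proof -
  have "a ` S = (\<Union>k\<in>S. {a k})"
    by blast
  then have hull: "convex hull (a ` S) = {\<Sum>k\<in>S. \<mu> k *\<^sub>R b k | \<mu> b.
      (\<forall>k\<in>S. \<mu> k \<ge> 0) \<and> sum \<mu> S = 1 \<and> (\<forall>k\<in>S. b k \<in> {a k})}"
    using convex_hull_finite_union[OF assms, of "\<lambda>k. {a k}"] by simp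
  show ?thesis
  proof
    assume "y \<in> convex hull (a ` S)"
    then obtain \<mu> b where "y = (\<Sum>k\<in>S. \<mu> k *\<^sub>R b k)" "\<forall>k\<in>S. \<mu> k \<ge> 0" "sum \<mu> S = 1"
      and "\<forall>k\<in>S. b k = a k"
      unfolding hull by blast
    then show "\<exists>\<mu>. (\<forall>k\<in>S. \<mu> k \<ge> 0) \<and> sum \<mu> S = 1 \<and> (\<Sum>k\<in>S. \<mu> k *\<^sub>R a k) = y"
      by (metis (mono_tags, lifting) sum.cong)
  next
    assume "\<exists>\<mu>. (\<forall>k\<in>S. \<mu> k \<ge> 0) \<and> sum \<mu> S = 1 \<and> (\<Sum>k\<in>S. \<mu> k *\<^sub>R a k) = y"
    then show "y \<in> convex hull (a ` S)"
      unfolding hull by blast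
  qed
qed

lemma log_sum_exp_conjugate_le:
  assumes "finite S" and w: "\<forall>k\<in>S. w k > 0"
    and \<mu>: "\<forall>k\<in>S. \<mu> k \<ge> 0" "sum \<mu> S = 1" and y: "y = (\<Sum>k\<in>S. \<mu> k *\<^sub>R a k)"
  shows "y \<bullet> x - log_sum_exp S w a x \<le> - (\<Sum>k\<in>S. \<mu> k * ln (w k))"
proof -
  have "y \<bullet> x - log_sum_exp S w a x = (\<Sum>k\<in>S. \<mu> k * (a k \<bullet> x - log_sum_exp S w a x))"
    using \<mu>(2) by (simp add: y inner_sum_left right_diff_distrib sum_subtractf flip: sum_distrib_right)
  also have "\<dots> \<le> (\<Sum>k\<in>S. \<mu> k * (- ln (w k)))"
    using ln_weight_plus_inner_le_log_sum_exp[OF \<open>finite S\<close> w] \<mu>(1)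
    by (intro sum_mono mult_left_mono) (auto simp: algebra_simps)
  finally show ?thesis
    by (simp add: sum_negf)
qed

lemma log_sum_exp_conjugate_unbounded:
  fixes a :: "'k \<Rightarrow> 'a::euclidean_space"
  assumes "finite S" "S \<noteq> {}" and w: "\<forall>k\<in>S. w k > 0" and y: "y \<notin> convex hull (a ` S)"
  shows "\<exists>x. r \<le> y \<bullet> x - log_sum_exp S w a x"
proof -
  have "closed (convex hull (a ` S))"
    using \<open>finite S\<close> by (simp add: compact_imp_closed finite_imp_compact_convex_hull)
  then obtain z b where zy: "z \<bullet> y < b" and "\<forall>q\<in>convex hull (a ` S). z \<bullet> q > b"
    using separating_hyperplane_closed_point[OF convex_convex_hull _ y] by blast
  then have za: "\<forall>k\<in>S. z \<bullet> a k > b"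
    using hull_subset[of "a ` S" convex] by auto
  define W where "W = (\<Sum>k\<in>S. w k)"
  have "W > 0"
    unfolding W_def using assms by (intro sum_pos) auto
  \<comment> \<open>Moving in the direction \<open>-z\<close> gains linearly on every vertex at once.\<close>
  have gain: "s * (b - z \<bullet> y) - ln W \<le> y \<bullet> (- s *\<^sub>R z) - log_sum_exp S w a (- s *\<^sub>R z)"
    if "s \<ge> 0" for s
  proof -
    have "s * b \<le> s * (z \<bullet> a k)" if "k \<in> S" for k
      using za that \<open>s \<ge> 0\<close> by (intro mult_left_mono) (auto intro: less_imp_le)
    then have "(\<Sum>k\<in>S. w k * exp (a k \<bullet> (- s *\<^sub>R z))) \<le> (\<Sum>k\<in>S. w k * exp (- s * b))"
      using w by (intro sum_mono mult_left_mono) (auto simp: inner_commute)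
    also have "\<dots> = W * exp (- s * b)"
      by (simp add: W_def sum_distrib_right)
    finally have "log_sum_exp S w a (- s *\<^sub>R z) \<le> ln (W * exp (- s * b))"
      unfolding log_sum_exp_def using weighted_exp_sum_pos[OF assms(1-3)] by (blast intro: ln_mono)
    also have "\<dots> = ln W - s * b"
      using \<open>W > 0\<close> by (simp add: ln_mult)
    finally show ?thesis
      by (simp add: algebra_simps inner_commute)
  qed
  define s where "s = (\<bar>r\<bar> + \<bar>ln W\<bar>) / (b - z \<bullet> y)"
  have "s \<ge> 0" and "s * (b - z \<bullet> y) = \<bar>r\<bar> + \<bar>ln W\<bar>"
    using zy by (simp_all add: s_def)
  then show ?thesis
    using gain[of s] by (intro exI[of _ "- s *\<^sub>R z"]) linarith
qed

lemma log_sum_exp_conjugate_finite_iff: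
  fixes a :: "'k \<Rightarrow> 'a::euclidean_space"
  assumes "finite S" "S \<noteq> {}" and w: "\<forall>k\<in>S. w k > 0"
  shows "(SUP x. ereal (y \<bullet> x - log_sum_exp S w a x)) < \<infinity> \<longleftrightarrow> y \<in> convex hull (a ` S)"
proof
  assume "y \<in> convex hull (a ` S)"
  then obtain \<mu> where \<mu>: "\<forall>k\<in>S. \<mu> k \<ge> 0" "sum \<mu> S = 1" "y = (\<Sum>k\<in>S. \<mu> k *\<^sub>R a k)"
    unfolding convex_hull_image_finite[OF \<open>finite S\<close>] by blast
  have "(SUP x. ereal (y \<bullet> x - log_sum_exp S w a x)) \<le> ereal (- (\<Sum>k\<in>S. \<mu> k * ln (w k)))"
    using log_sum_exp_conjugate_le[OF \<open>finite S\<close> w \<mu>] by (intro SUP_least) simp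
  then show "(SUP x. ereal (y \<bullet> x - log_sum_exp S w a x)) < \<infinity>"
    by (rule order.strict_trans1) simp
next
  assume "(SUP x. ereal (y \<bullet> x - log_sum_exp S w a x)) < \<infinity>"
  moreover have "(SUP x. ereal (y \<bullet> x - log_sum_exp S w a x)) = \<infinity>"
    if "y \<notin> convex hull (a ` S)"
  proof (rule SUP_PInfty)
    fix n :: nat
    show "\<exists>x\<in>UNIV. ereal (real n) \<le> ereal (y \<bullet> x - log_sum_exp S w a x)"
      using log_sum_exp_conjugate_unbounded[OF assms that] by simp
  qed
  ultimately show "y \<in> convex hull (a ` S)"
    by auto
qed

lemma rel_interior_convex_hull_image_pos:
  fixes a :: "'k \<Rightarrow> 'a::euclidean_space"
  assumes "finite S" "S \<noteq> {}" and y: "y \<in> rel_interior (convex hull (a ` S))"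
  obtains \<mu> where "\<forall>k\<in>S. \<mu> k > 0" "sum \<mu> S = 1" "y = (\<Sum>k\<in>S. \<mu> k *\<^sub>R a k)"
proof -
  define N where "N = real (card S)"
  have "N > 0"
    using assms by (simp add: N_def card_gt_0_iff)
  define b where "b = (\<Sum>k\<in>S. (1 / N) *\<^sub>R a k)"
  have b: "b \<in> convex hull (a ` S)"
    unfolding b_def convex_hull_image_finite[OF \<open>finite S\<close>] using \<open>N > 0\<close>
    by (intro exI[of _ "\<lambda>_. 1 / N"]) (simp add: N_def)
  \<comment> \<open>The hull contains a point beyond \<open>y\<close> on the ray from the barycentre \<open>b\<close>; mixing its
    weights with the uniform weights of \<open>b\<close> gives positive weights for \<open>y\<close>.\<close>
  then obtain e where e: "e > 1" "(1 - e) *\<^sub>R b + e *\<^sub>R y \<in> convex hull (a ` S)"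
    using y convex_rel_interior_iff[OF convex_convex_hull, of "a ` S" y] by blast
  then obtain \<nu> where \<nu>: "\<forall>k\<in>S. \<nu> k \<ge> 0" "sum \<nu> S = 1"
    "(\<Sum>k\<in>S. \<nu> k *\<^sub>R a k) = (1 - e) *\<^sub>R b + e *\<^sub>R y"
    unfolding convex_hull_image_finite[OF \<open>finite S\<close>] by blast
  define \<mu> where "\<mu> k = (\<nu> k + (e - 1) / N) / e" for k
  show ?thesis
  proof
    show "\<forall>k\<in>S. \<mu> k > 0"
      unfolding \<mu>_def using \<nu>(1) e(1) \<open>N > 0\<close> by (auto intro!: divide_pos_pos add_nonneg_pos)
    show "sum \<mu> S = 1"
      unfolding \<mu>_def using \<nu>(2) e(1) \<open>N > 0\<close>
      by (simp add: sum_divide_distrib[symmetric] sum.distrib N_def)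
    have "(\<Sum>k\<in>S. \<mu> k *\<^sub>R a k) = (1 / e) *\<^sub>R ((\<Sum>k\<in>S. \<nu> k *\<^sub>R a k) + (e - 1) *\<^sub>R b)"
      unfolding \<mu>_def b_def
      by (simp add: scaleR_sum_right sum.distrib[symmetric] scaleR_add_left[symmetric] add_divide_distrib)
    also have "\<dots> = y"
      using e(1) by (simp add: \<nu>(3) algebra_simps)
    finally show "y = (\<Sum>k\<in>S. \<mu> k *\<^sub>R a k)" ..
  qed
qed

lemma bounded_zero_weighted_sum_bounded_above:
  fixes \<mu> :: "'k::finite \<Rightarrow> real"
  assumes \<mu>: "\<forall>k\<in>S. \<mu> k > 0" and "0 \<le> R"
  shows "bounded {u::real^'k. (\<forall>k\<in>S. u$k \<le> R) \<and> (\<forall>k. k \<notin> S \<longrightarrow> u$k = 0) \<and> (\<Sum>k\<in>S. \<mu> k * u$k) = 0}"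
    (is "bounded ?U")
proof -
  define B where "B = (\<chi> k. if k \<in> S then R + R * sum \<mu> S / \<mu> k else 0)"
  have "u \<in> cbox (- B) B" if u: "u \<in> ?U" for u
  proof -
    have "- B$k \<le> u$k \<and> u$k \<le> B$k" for k
    proof (cases "k \<in> S")
      case True
      have "\<mu> k * u$k = - (\<Sum>j\<in>S - {k}. \<mu> j * u$j)"
        using u sum.remove[OF finite True, of "\<lambda>j. \<mu> j * u$j"] by simp
      moreover have "(\<Sum>j\<in>S - {k}. \<mu> j * u$j) \<le> (\<Sum>j\<in>S. \<mu> j * R)"
        using u \<mu> \<open>0 \<le> R\<close>
        by (intro order.trans[OF sum_mono sum_mono2]) (auto intro: mult_left_mono less_imp_le)
      moreover have "(\<Sum>j\<in>S. \<mu> j * R) = sum \<mu> S * R"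
        by (simp add: sum_distrib_right)
      ultimately have "- (sum \<mu> S * R) \<le> \<mu> k * u$k"
        by linarith
      then have "- (R * sum \<mu> S / \<mu> k) \<le> u$k"
        using \<mu> True by (simp add: field_simps)
      moreover have "0 \<le> R * sum \<mu> S / \<mu> k"
        using \<mu> True \<open>0 \<le> R\<close>
        by (intro divide_nonneg_pos mult_nonneg_nonneg sum_nonneg) (auto intro: less_imp_le)
      ultimately show ?thesis
        using u True \<open>0 \<le> R\<close> by (auto simp: B_def)
    qed (use u in \<open>simp add: B_def\<close>)
    then show ?thesis
      by (simp add: mem_box_cart)
  qed
  then show ?thesis
    by (meson bounded_cbox bounded_subset subsetI)
qed

lemma continuous_attains_inf_bounded_sublevel:
  fixes f :: "'a::heine_borel \<Rightarrow> real"
  assumes "closed U" "continuous_on UNIV f" "u0 \<in> U" "bounded {u\<in>U. f u \<le> f u0}"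
  shows "\<exists>u\<in>U. \<forall>u'\<in>U. f u \<le> f u'"
proof -
  have "compact {u\<in>U. f u \<le> f u0}"
    using assms by (simp add: compact_eq_bounded_closed closed_Collect_le closed_Collect_conj
        continuous_on_const Collect_conj_eq closed_Int Collect_mem_eq)
  then obtain u where "u \<in> U" "f u \<le> f u0" "\<forall>u'\<in>U. f u' \<le> f u0 \<longrightarrow> f u \<le> f u'"
    using continuous_attains_inf[of "{u\<in>U. f u \<le> f u0}" f] assms
    by (auto intro: continuous_on_subset)
  then show ?thesis
    by (meson order.trans linear)
qed

lemma weighted_exp_sum_attains_min_on_subspace:
  fixes U :: "(real^'k::finite) set"
  assumes "subspace U" and w: "\<forall>k\<in>S. w k > 0" and \<mu>: "\<forall>k\<in>S. \<mu> k > 0"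
    and U: "\<forall>u\<in>U. (\<forall>k. k \<notin> S \<longrightarrow> u$k = 0) \<and> (\<Sum>k\<in>S. \<mu> k * u$k) = 0"
  obtains u0 where "u0 \<in> U" "\<forall>u\<in>U. (\<Sum>k\<in>S. w k * exp (u0$k)) \<le> (\<Sum>k\<in>S. w k * exp (u$k))"
proof -
  \<comment> \<open>A sublevel set bounds the coordinates in \<open>S\<close> from above, and the balance
    condition then bounds them from below.\<close>
  define G :: "real^'k \<Rightarrow> real" where "G u = (\<Sum>k\<in>S. w k * exp (u$k))" for u
  define R where "R = (\<Sum>k\<in>S. \<bar>ln (G 0) - ln (w k)\<bar>)"
  have "0 \<le> R"
    unfolding R_def by (simp add: sum_nonneg)
  have "u$k \<le> R" if "G u \<le> G 0" "k \<in> S" for u k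
  proof -
    have "w k * exp (u$k) \<le> G u"
      using w \<open>k \<in> S\<close> unfolding G_def by (intro member_le_sum) (auto intro: less_imp_le)
    then have "w k * exp (u$k) \<le> G 0"
      using that(1) by linarith
    then have "ln (w k * exp (u$k)) \<le> ln (G 0)"
      using w \<open>k \<in> S\<close> by (intro ln_mono) auto
    moreover have "w k > 0"
      using w \<open>k \<in> S\<close> by blast
    ultimately have "ln (w k) + u$k \<le> ln (G 0)"
      by (simp add: ln_mult)
    also have "\<dots> \<le> ln (w k) + R"
      unfolding R_def using member_le_sum[of k S "\<lambda>k. \<bar>ln (G 0) - ln (w k)\<bar>"] \<open>k \<in> S\<close> by auto
    finally show ?thesis
      by simp
  qed
  then have "{u \<in> U. G u \<le> G 0} \<subseteq>
      {u. (\<forall>k\<in>S. u$k \<le> R) \<and> (\<forall>k. k \<notin> S \<longrightarrow> u$k = 0) \<and> (\<Sum>k\<in>S. \<mu> k * u$k) = 0}"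
    using U by (simp add: subset_iff)
  then have "bounded {u \<in> U. G u \<le> G 0}"
    by (rule bounded_subset[OF bounded_zero_weighted_sum_bounded_above[OF \<mu> \<open>0 \<le> R\<close>]])
  moreover have "continuous_on UNIV G"
    unfolding G_def by (intro continuous_intros)
  ultimately obtain u0 where "u0 \<in> U" "\<forall>u\<in>U. G u0 \<le> G u"
    using continuous_attains_inf_bounded_sublevel[of U G 0] closed_subspace[OF \<open>subspace U\<close>]
      subspace_0[OF \<open>subspace U\<close>]
    by blast
  then show ?thesis
    using that unfolding G_def by blast
qed

lemma log_sum_exp_conjugate_attains_max:
  fixes a :: "'k::finite \<Rightarrow> 'a::euclidean_space"
  assumes "S \<noteq> {}" and w: "\<forall>k\<in>S. w k > 0" and y: "y \<in> rel_interior (convex hull (a ` S))"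
  obtains x0 where "\<forall>x. y \<bullet> x - log_sum_exp S w a x \<le> y \<bullet> x0 - log_sum_exp S w a x0"
proof -
  obtain \<mu> where \<mu>: "\<forall>k\<in>S. \<mu> k > 0" "sum \<mu> S = 1" "y = (\<Sum>k\<in>S. \<mu> k *\<^sub>R a k)"
    using rel_interior_convex_hull_image_pos[OF finite \<open>S \<noteq> {}\<close> y] by blast
  \<comment> \<open>The objective only depends on the coordinates \<open>(a k - y) \<bullet> x\<close>, balanced by \<open>\<mu>\<close>.\<close>
  define L :: "'a \<Rightarrow> real^'k" where "L x = (\<chi> k. if k \<in> S then (a k - y) \<bullet> x else 0)" for x
  have "linear L"
    by (rule linearI) (auto simp: L_def vec_eq_iff inner_add_right)
  have objective: "y \<bullet> x - log_sum_exp S w a x = - ln (\<Sum>k\<in>S. w k * exp (L x $ k))" for x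
  proof -
    have "(\<Sum>k\<in>S. w k * exp (L x $ k)) = exp (- (y \<bullet> x)) * (\<Sum>k\<in>S. w k * exp (a k \<bullet> x))"
      unfolding L_def sum_distrib_left
      by (rule sum.cong) (auto simp: inner_diff_left exp_diff exp_minus field_simps)
    then show ?thesis
      using weighted_exp_sum_pos[OF finite \<open>S \<noteq> {}\<close> w, of a x]
      by (simp add: log_sum_exp_def ln_mult)
  qed
  have "(\<Sum>k\<in>S. \<mu> k * L x $ k) = 0" for x
  proof -
    have "(\<Sum>k\<in>S. \<mu> k * L x $ k) = (\<Sum>k\<in>S. \<mu> k * (a k \<bullet> x)) - y \<bullet> x"
      using \<mu>(2)
      by (simp add: L_def inner_diff_left right_diff_distrib sum_subtractf flip: sum_distrib_right)
    then show ?thesis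
      by (simp add: \<mu>(3) inner_sum_left)
  qed
  then have "\<forall>u\<in>range L. (\<forall>k. k \<notin> S \<longrightarrow> u$k = 0) \<and> (\<Sum>k\<in>S. \<mu> k * u$k) = 0"
    by (auto simp: L_def)
  then obtain u0 where "u0 \<in> range L"
    and u0_min: "\<forall>u\<in>range L. (\<Sum>k\<in>S. w k * exp (u0$k)) \<le> (\<Sum>k\<in>S. w k * exp (u$k))"
    by (rule weighted_exp_sum_attains_min_on_subspace
        [OF linear_subspace_image[OF \<open>linear L\<close> subspace_UNIV] w \<mu>(1)])
  then obtain x0 where x0: "u0 = L x0"
    by blast
  have pos: "(\<Sum>k\<in>S. w k * exp (u$k)) > 0" for u :: "real^'k"
    using \<open>S \<noteq> {}\<close> w by (intro sum_pos) auto
  have "y \<bullet> x - log_sum_exp S w a x \<le> y \<bullet> x0 - log_sum_exp S w a x0" for x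
  proof -
    have "(\<Sum>k\<in>S. w k * exp (L x0 $ k)) \<le> (\<Sum>k\<in>S. w k * exp (L x $ k))"
      using u0_min x0 by blast
    then show ?thesis
      unfolding objective using pos by simp
  qed
  then show ?thesis
    using that by blast
qed

section \<open>The Brascamp--Lieb constant\<close>

lemma Inf_exp_uminus_eq:
  fixes g :: "'a \<Rightarrow> real"
  shows "Inf (range (\<lambda>x. exp (- g x))) = (case SUP x. ereal (g x) of ereal r \<Rightarrow> exp (- r) | _ \<Rightarrow> 0)"
proof -
  let ?D = "Inf (range (\<lambda>x. exp (- g x)))" and ?s = "SUP x. ereal (g x)"
  have bdd: "bdd_below (range (\<lambda>x. exp (- g x)))"
    by (rule bdd_belowI[of _ 0]) auto
  have "?D \<ge> 0"
    by (rule cInf_greatest) auto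
  have le_sup: "ereal (g x) \<le> ?s" for x
    by (rule SUP_upper) simp
  have sup_le: "?s \<le> ereal (- ln ?D)" if "?D > 0"
  proof (rule SUP_least)
    fix x
    have "ln ?D \<le> ln (exp (- g x))"
      using that bdd by (intro ln_mono cInf_lower) auto
    then show "ereal (g x) \<le> ereal (- ln ?D)"
      by simp
  qed
  show ?thesis
  proof (cases ?s)
    case (real r)
    then have "exp (- r) \<le> ?D"
      using le_sup by (intro cInf_greatest) auto
    then have "?D > 0"
      using exp_gt_zero[of "- r"] by linarith
    then have "ln ?D \<le> - r"
      using sup_le real by simp
    then have "?D \<le> exp (- r)"
      using \<open>?D > 0\<close> by (metis exp_le_cancel_iff exp_ln)
    then show ?thesis
      using \<open>exp (- r) \<le> ?D\<close> real by simp
  next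
    case PInf
    then show ?thesis
      using sup_le \<open>?D \<ge> 0\<close> by force
  next
    case MInf
    then show ?thesis
      using le_sup by simp
  qed
qed

lemma SUP_ereal_neq_MInf: "(SUP x. ereal (g x)) \<noteq> - \<infinity>"
  using SUP_upper[of undefined UNIV "\<lambda>x. ereal (g x)"] by auto

lemma Inf_exp_uminus_pos_iff:
  fixes g :: "'a \<Rightarrow> real"
  shows "Inf (range (\<lambda>x. exp (- g x))) > 0 \<longleftrightarrow> (SUP x. ereal (g x)) < \<infinity>"
  using SUP_ereal_neq_MInf[of g] Inf_exp_uminus_eq[of g] by (cases "SUP x. ereal (g x)") simp_all

lemma Inf_exp_uminus_attained_iff:
  fixes g :: "'a \<Rightarrow> real"
  shows "(\<exists>x. exp (- g x) = Inf (range (\<lambda>x. exp (- g x)))) \<longleftrightarrow> (\<exists>x. ereal (g x) = (SUP x. ereal (g x)))"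
  using SUP_ereal_neq_MInf[of g] Inf_exp_uminus_eq[of g] by (cases "SUP x. ereal (g x)") simp_all

definition basis_index_sets :: "('m::finite \<Rightarrow> real^'n) \<Rightarrow> 'm set set" where
  "basis_index_sets v = {I. card I = CARD('n) \<and> d_I v I \<noteq> 0}"

lemma d_I_pos: "I \<in> basis_index_sets v \<Longrightarrow> d_I v I > 0"
  using d_I_nonneg[of v I] by (simp add: basis_index_sets_def)

lemma K_poly_eq_convex_hull: "K_poly v = convex hull (indic_vec ` basis_index_sets v)"
  unfolding K_poly_def basis_index_sets_def by (rule arg_cong[where f="\<lambda>X. convex hull X"]) auto

lemma inner_indic_vec: "indic_vec I \<bullet> x = (\<Sum>i\<in>I. x $ i)"
  for x :: "real^'m::finite"
proof -
  have "indic_vec I \<bullet> x = (\<Sum>i\<in>UNIV. if i \<in> I then x $ i else 0)"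
    unfolding inner_vec_def indic_vec_def by (intro sum.cong) auto
  then show ?thesis
    by (simp add: sum.If_cases)
qed

lemma det_sum_exp_outer:
  fixes v :: "'m::finite \<Rightarrow> real^'n"
  shows "det (\<Sum>i\<in>UNIV. exp (x $ i) *\<^sub>R outer (v i)) =
    (\<Sum>I\<in>basis_index_sets v. d_I v I * exp (indic_vec I \<bullet> x))"
  unfolding cauchy_binet_sum_outer basis_index_sets_def
  by (rule sum.mono_neutral_cong_right) (auto simp: inner_indic_vec exp_sum)

lemma phi_eq_log_sum_exp: "phi v = log_sum_exp (basis_index_sets v) (d_I v) indic_vec"
  by (simp add: fun_eq_iff phi_def log_sum_exp_def det_sum_exp_outer)

lemma basis_index_sets_nonempty:
  fixes v :: "'m::finite \<Rightarrow> real^'n"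
  assumes "span (range v) = UNIV"
  shows "basis_index_sets v \<noteq> {}"
  using det_sum_outer_nonzero[OF assms] det_sum_exp_outer[of 0 v] by auto

lemma BL_ratio_exp:
  fixes v :: "'m::finite \<Rightarrow> real^'n"
  assumes "span (range v) = UNIV"
  shows "BL_ratio v c (\<chi> i. exp (x $ i)) = exp (- (c \<bullet> x - phi v x))"
proof -
  have "det (\<Sum>i\<in>UNIV. exp (x $ i) *\<^sub>R outer (v i)) > 0"
    unfolding det_sum_exp_outer using basis_index_sets_nonempty[OF assms]
    by (intro sum_pos mult_pos_pos) (auto simp: d_I_pos)
  then have "det (\<Sum>i\<in>UNIV. exp (x $ i) *\<^sub>R outer (v i)) = exp (phi v x)"
    by (simp add: phi_def)
  moreover have "(\<Prod>i\<in>UNIV. exp (x $ i) powr (c $ i)) = exp (c \<bullet> x)"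
    by (simp add: powr_def inner_vec_def exp_sum mult.commute)
  ultimately show ?thesis
    by (simp add: BL_ratio_def exp_diff exp_minus_inverse field_simps)
qed

lemma positive_vectors_eq_range_exp: "{lam::real^'m. \<forall>i. lam $ i > 0} = range (\<lambda>x. \<chi> i. exp (x $ i))"
proof (intro set_eqI iffI)
  fix lam :: "real^'m" assume "lam \<in> {lam. \<forall>i. lam $ i > 0}"
  then have "lam = (\<chi> i. exp ((\<chi> i. ln (lam $ i)) $ i))"
    by (simp add: vec_eq_iff)
  then show "lam \<in> range (\<lambda>x. \<chi> i. exp (x $ i))"
    by blast
qed auto

lemma D_const_eq_Inf:
  fixes v :: "'m::finite \<Rightarrow> real^'n"
  assumes "span (range v) = UNIV"
  shows "D_const v c = Inf (range (\<lambda>x. exp (- (c \<bullet> x - phi v x))))"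
  unfolding D_const_def positive_vectors_eq_range_exp image_image BL_ratio_exp[OF assms] ..

lemma D_const_eq_exp_uminus_phi_star:
  fixes v :: "'m::finite \<Rightarrow> real^'n"
  assumes "span (range v) = UNIV"
  shows "D_const v c = (case phi_star v c of ereal r \<Rightarrow> exp (- r) | _ \<Rightarrow> 0)"
  unfolding D_const_eq_Inf[OF assms] phi_star_def by (rule Inf_exp_uminus_eq)

lemma D_const_pos_iff:
  fixes v :: "'m::finite \<Rightarrow> real^'n"
  assumes "span (range v) = UNIV"
  shows "D_const v c > 0 \<longleftrightarrow> c \<in> dom_phi_star v"
  unfolding D_const_eq_Inf[OF assms] dom_phi_star_def mem_Collect_eq phi_star_def
  by (rule Inf_exp_uminus_pos_iff)

lemma BL_ratio_attains_D_const_iff: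
  fixes v :: "'m::finite \<Rightarrow> real^'n"
  assumes "span (range v) = UNIV"
  shows "(\<exists>lam. (\<forall>i. lam $ i > 0) \<and> BL_ratio v c lam = D_const v c) \<longleftrightarrow>
    (\<exists>x. ereal (c \<bullet> x - phi v x) = phi_star v c)"
proof -
  have "(\<exists>lam. (\<forall>i. lam $ i > 0) \<and> BL_ratio v c lam = D_const v c) \<longleftrightarrow>
      (\<exists>lam \<in> {lam. \<forall>i. lam $ i > 0}. BL_ratio v c lam = D_const v c)"
    by blast
  also have "\<dots> \<longleftrightarrow> (\<exists>x. BL_ratio v c (\<chi> i. exp (x $ i)) = D_const v c)"
    unfolding positive_vectors_eq_range_exp by blast
  also have "\<dots> \<longleftrightarrow> (\<exists>x. exp (- (c \<bullet> x - phi v x)) = Inf (range (\<lambda>x. exp (- (c \<bullet> x - phi v x)))))"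
    by (simp only: BL_ratio_exp[OF assms] D_const_eq_Inf[OF assms])
  also have "\<dots> \<longleftrightarrow> (\<exists>x. ereal (c \<bullet> x - phi v x) = phi_star v c)"
    unfolding phi_star_def by (rule Inf_exp_uminus_attained_iff)
  finally show ?thesis .
qed

lemma basis_index_sets_weights:
  fixes v :: "'m::finite \<Rightarrow> real^'n"
  assumes "span (range v) = UNIV"
  shows "finite (basis_index_sets v)" "basis_index_sets v \<noteq> {}" "\<forall>I\<in>basis_index_sets v. d_I v I > 0"
  using basis_index_sets_nonempty[OF assms] d_I_pos by auto

lemma convex_on_phi:
  fixes v :: "'m::finite \<Rightarrow> real^'n"
  assumes "span (range v) = UNIV"
  shows "convex_on UNIV (phi v)"
  unfolding phi_eq_log_sum_exp by (rule convex_on_log_sum_exp[OF basis_index_sets_weights[OF assms]])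

lemma dom_phi_star_eq_K_poly:
  fixes v :: "'m::finite \<Rightarrow> real^'n"
  assumes "span (range v) = UNIV"
  shows "dom_phi_star v = K_poly v"
  unfolding dom_phi_star_def phi_star_def phi_eq_log_sum_exp K_poly_eq_convex_hull
  using log_sum_exp_conjugate_finite_iff[OF basis_index_sets_weights[OF assms]] by blast

lemma phi_star_attained_rel_interior_K_poly:
  fixes v :: "'m::finite \<Rightarrow> real^'n"
  assumes "span (range v) = UNIV" and c: "c \<in> rel_interior (K_poly v)"
  shows "\<exists>x. ereal (c \<bullet> x - phi v x) = phi_star v c"
proof -
  obtain x0 where "\<forall>x. c \<bullet> x - phi v x \<le> c \<bullet> x0 - phi v x0"
    using log_sum_exp_conjugate_attains_max[OF basis_index_sets_weights(2,3)[OF assms(1)]]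
      c[unfolded K_poly_eq_convex_hull]
    unfolding phi_eq_log_sum_exp by blast
  then have "phi_star v c = ereal (c \<bullet> x0 - phi v x0)"
    unfolding phi_star_def by (intro antisym SUP_least SUP_upper2[of x0]) auto
  then show ?thesis
    by metis
qed

theorem proposition6:
  fixes v :: "'m::finite \<Rightarrow> real^'n" and c :: "real^'m"
  assumes nonzero: "\<forall>i. v i \<noteq> 0"
    and spans: "span (range v) = UNIV"
    and cpos: "\<forall>i. c$i > 0"
    and csum: "(\<Sum>i\<in>UNIV. c$i) = real CARD('n)"
  shows "convex_on UNIV (phi v)
    \<and> D_const v c = (case phi_star v c of ereal r \<Rightarrow> exp (- r) | _ \<Rightarrow> 0)
    \<and> (D_const v c > 0 \<longleftrightarrow> c \<in> dom_phi_star v)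
    \<and> ((\<exists>lam. (\<forall>i. lam$i > 0) \<and> BL_ratio v c lam = D_const v c) \<longleftrightarrow>
         (\<exists>x. ereal (c \<bullet> x - phi v x) = phi_star v c))
    \<and> dom_phi_star v = K_poly v
    \<and> (c \<in> rel_interior (K_poly v) \<longrightarrow>
         (\<exists>lam. (\<forall>i. lam$i > 0) \<and> BL_ratio v c lam = D_const v c))"
  using convex_on_phi[OF spans] D_const_eq_exp_uminus_phi_star[OF spans]
    D_const_pos_iff[OF spans] BL_ratio_attains_D_const_iff[OF spans] dom_phi_star_eq_K_poly[OF spans]
    phi_star_attained_rel_interior_K_poly[OF spans]
  by blast

end
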